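(* Let $K\ge 1$, $D\ge 1$, reservoir sizes $N^{(1)},\dots,N^{(K)}\ge 1$, encoder sizes $M^{(1)},\dots,M^{(K-1)}\ge 1$, and a leak rate $\gamma\in(0,1]$ be fixed. Let $\mathbf{W}^{res(i)}\in\mathbb{R}^{N^{(i)}\times N^{(i)}}$ ($i=1,\dots,K$), $\mathbf{W}^{in(1)}\in\mathbb{R}^{N^{(1)}\times D}$, $\mathbf{W}^{in(i)}\in\mathbb{R}^{N^{(i)}\times M^{(i-1)}}$ ($i=2,\dots,K$) and $\mathbf{W}^{enc(j)}\in\mathbb{R}^{M^{(j)}\times N^{(j)}}$ ($j=1,\dots,K-1$) be fixed real matrices. Consider the Deep-ESN dynamics defined below, with $f=\tanh$ applied componentwise. Suppose that for every $i=1,\dots,K$ the largest singular value satisfies $\overline{\sigma}(\mathbf{W}^{res(i)})<1$. Then for every input sequence $(\mathbf{u}(t))_{t\ge 1}$ in $\mathbb{R}^D$ and any two choices of initial states $\{\mathbf{x}^{(i)}_{res}(0)\}_{i=1}^K$ and $\{\widetilde{\mathbf{x}}^{(i)}_{res}(0)\}_{i=1}^K$, the two resulting state trajectories (driven by the same input sequence) satisfy $$\lim_{t\to\infty}\|\mathbf{x}^{(i)}_{res}(t)-\widetilde{\mathbf{x}}^{(i)}_{res}(t)\|_2=0\quad\text{for all } i=1,\dots,K,$$ i.e. the Deep-ESN has the echo-state property.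
   Context: Deep-ESN dynamics (with linear encoders): for $t\ge 0$ and $i=1,\dots,K$, $$\mathbf{x}^{(i)}_{res}(t+1)=(1-\gamma)\,\mathbf{x}^{(i)}_{res}(t)+\gamma\, f\big(\mathbf{W}^{res(i)}\mathbf{x}^{(i)}_{res}(t)+\mathbf{W}^{in(i)}\mathbf{x}^{(i)}_{in}(t+1)\big),$$ where $\mathbf{x}^{(1)}_{in}(t+1)=\mathbf{u}(t+1)$ and, for $i\ge 2$, $\mathbf{x}^{(i)}_{in}(t+1)=\mathbf{x}^{(i-1)}_{enc}(t+1)$ with the (linear) encoder output $\mathbf{x}^{(j)}_{enc}(t)=\mathbf{W}^{enc(j)}\mathbf{x}^{(j)}_{res}(t)$. The tilde trajectory is defined by the same equations with the same input $\mathbf{u}$ but different initial reservoir states. $f=\tanh$ is applied componentwise and is 1-Lipschitz. $\overline{\sigma}(\mathbf{A})$ denotes the largest singular value (operator 2-norm) of a matrix $\mathbf{A}$. *)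

theory Defs
  imports Complex_Main
begin

text \<open>Layer dimensions vary with the layer index, so vectors are represented as
  functions nat => real (only indices below the dimension matter) and matrices as
  nat => nat => real (row, column).\<close>

definition matvec :: "(nat \<Rightarrow> nat \<Rightarrow> real) \<Rightarrow> nat \<Rightarrow> (nat \<Rightarrow> real) \<Rightarrow> (nat \<Rightarrow> real)" where
  "matvec A n x = (\<lambda>r. \<Sum>c<n. A r c * x c)"

definition vnorm :: "nat \<Rightarrow> (nat \<Rightarrow> real) \<Rightarrow> real" where
  "vnorm n x = sqrt (\<Sum>i<n. (x i)\<^sup>2)"

text \<open>Largest singular value (operator 2-norm) of an m x n matrix.\<close>
definition sigma_max :: "nat \<Rightarrow> nat \<Rightarrow> (nat \<Rightarrow> nat \<Rightarrow> real) \<Rightarrow> real" where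
  "sigma_max m n A = (SUP x\<in>{x. vnorm n x \<le> 1}. vnorm m (matvec A n x))"

text \<open>x t i is the reservoir state of layer i (1..K) at time t; u t is the input at time t.\<close>
definition deep_esn_traj ::
  "nat \<Rightarrow> nat \<Rightarrow> (nat \<Rightarrow> nat) \<Rightarrow> (nat \<Rightarrow> nat) \<Rightarrow> real
   \<Rightarrow> (nat \<Rightarrow> nat \<Rightarrow> nat \<Rightarrow> real) \<Rightarrow> (nat \<Rightarrow> nat \<Rightarrow> nat \<Rightarrow> real) \<Rightarrow> (nat \<Rightarrow> nat \<Rightarrow> nat \<Rightarrow> real)
   \<Rightarrow> (nat \<Rightarrow> nat \<Rightarrow> real) \<Rightarrow> (nat \<Rightarrow> nat \<Rightarrow> nat \<Rightarrow> real) \<Rightarrow> bool" where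
  "deep_esn_traj K D N M \<gamma> Wres Win Wenc u x \<longleftrightarrow>
     (\<forall>t. \<forall>i\<in>{1..K}. \<forall>r<N i.
        x (Suc t) i r =
          (1 - \<gamma>) * x t i r
          + \<gamma> * tanh (matvec (Wres i) (N i) (x t i) r
               + (if i = 1 then matvec (Win 1) D (u (Suc t)) r
                  else matvec (Win i) (M (i - 1))
                         (matvec (Wenc (i - 1)) (N (i - 1)) (x (Suc t) (i - 1))) r)))"

end

theory Submission
  imports Defs "HOL-Analysis.L2_Norm"
begin

text \<open>Let \<open>d\<^sub>i(t)\<close> be the distance of the two trajectories in layer \<open>i\<close>. Since \<open>tanh\<close>
  is 1-Lipschitz and the operator norm bounds every matrix, one step of layer \<open>i\<close> gives
  \<open>d\<^sub>i(t+1) \<le> (1 - \<gamma> + \<gamma> \<sigma>(W_res i)) d\<^sub>i(t) + \<gamma> \<sigma>(W_in i) \<sigma>(W_enc (i-1)) d\<^sub>i\<^sub>-\<^sub>1(t+1)\<close>,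
  without the last term for the first layer. The factor in front of \<open>d\<^sub>i(t)\<close> is below 1, and
  a sequence contracted by a fixed factor up to a perturbation tending to 0 tends to 0 itself;
  so \<open>d\<^sub>i \<longlonglongrightarrow> 0\<close> follows by induction over the layers.\<close>

lemma tanh_real_lipschitz: "\<bar>tanh a - tanh b\<bar> \<le> \<bar>a - b :: real\<bar>"
proof -
  have increment: "0 \<le> tanh q - tanh p \<and> tanh q - tanh p \<le> q - p" if "p < q" for p q :: real
  proof -
    have "DERIV tanh z :> 1 - tanh z ^ 2" for z :: real
      using has_field_derivative_tanh[where g = "\<lambda>x. x" and Db = 1 and x = z, OF _ DERIV_ident]
        cosh_real_pos[of z] by simp
    then obtain z where "tanh q - tanh p = (q - p) * (1 - tanh z ^ 2)"
      using MVT2[OF \<open>p < q\<close>, of tanh "\<lambda>z. 1 - tanh z ^ 2"] by blast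
    moreover have "0 \<le> 1 - tanh z ^ 2" "1 - tanh z ^ 2 \<le> 1"
      using tanh_real_bounds[of z] by (auto simp: abs_square_le_1)
    ultimately show ?thesis
      using \<open>p < q\<close> by (simp add: mult_left_le)
  qed
  show ?thesis
    by (cases a b rule: linorder_cases) (auto dest: increment)
qed

lemma vnorm_eq_L2_set: "vnorm n x = L2_set x {..<n}"
  by (simp add: vnorm_def L2_set_def)

lemma vnorm_nonneg: "0 \<le> vnorm n x"
  by (simp add: vnorm_def sum_nonneg)

lemma vnorm_abs: "vnorm n (\<lambda>r. \<bar>x r\<bar>) = vnorm n x"
  by (simp add: vnorm_def)

lemma vnorm_zero: "vnorm n (\<lambda>r. 0) = 0"
  by (simp add: vnorm_def)

lemma vnorm_mult: "vnorm n (\<lambda>r. c * x r) = \<bar>c\<bar> * vnorm n x"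
  by (simp add: vnorm_def power_mult_distrib real_sqrt_mult flip: sum_distrib_left)

lemma vnorm_triangle: "vnorm n (\<lambda>r. x r + y r) \<le> vnorm n x + vnorm n y"
  unfolding vnorm_eq_L2_set by (rule L2_set_triangle_ineq)

lemma vnorm_mono_abs:
  assumes "\<forall>r<n. \<bar>x r\<bar> \<le> \<bar>y r\<bar>"
  shows "vnorm n x \<le> vnorm n y"
  using assms unfolding vnorm_def by (auto intro!: sum_mono simp: abs_le_square_iff)

lemma matvec_diff: "(\<lambda>r. matvec A n x r - matvec A n y r) = matvec A n (\<lambda>c. x c - y c)"
  by (simp add: matvec_def fun_eq_iff sum_subtractf right_diff_distrib)

lemma vnorm_matvec_le_frobenius:
  "vnorm m (matvec A n x) \<le> sqrt (\<Sum>r<m. \<Sum>c<n. (A r c)\<^sup>2) * vnorm n x"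
proof -
  have row: "(matvec A n x r)\<^sup>2 \<le> (\<Sum>c<n. (A r c)\<^sup>2) * (\<Sum>c<n. (x c)\<^sup>2)" for r
  proof -
    have "\<bar>matvec A n x r\<bar> \<le> (\<Sum>c<n. \<bar>A r c\<bar> * \<bar>x c\<bar>)"
      unfolding matvec_def by (rule order_trans[OF sum_abs]) (simp add: abs_mult)
    also have "\<dots> \<le> L2_set (A r) {..<n} * L2_set x {..<n}"
      by (rule L2_set_mult_ineq)
    finally have "\<bar>matvec A n x r\<bar>\<^sup>2 \<le> (L2_set (A r) {..<n} * L2_set x {..<n})\<^sup>2"
      by (rule power_mono) simp
    then show ?thesis
      by (simp add: power_mult_distrib L2_set_def sum_nonneg)
  qed
  have "(\<Sum>r<m. (matvec A n x r)\<^sup>2) \<le> (\<Sum>r<m. \<Sum>c<n. (A r c)\<^sup>2) * (\<Sum>c<n. (x c)\<^sup>2)"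
    using row by (simp add: sum_mono sum_distrib_right)
  then show ?thesis
    unfolding vnorm_def by (metis real_sqrt_le_iff real_sqrt_mult)
qed

lemma bdd_above_sigma_max_set:
  "bdd_above ((\<lambda>x. vnorm m (matvec A n x)) ` {x. vnorm n x \<le> 1})"
proof (rule bdd_aboveI2)
  let ?F = "sqrt (\<Sum>r<m. \<Sum>c<n. (A r c)\<^sup>2)"
  fix x assume "x \<in> {x. vnorm n x \<le> 1}"
  then have "?F * vnorm n x \<le> ?F"
    by (simp add: mult_left_le sum_nonneg)
  then show "vnorm m (matvec A n x) \<le> ?F"
    using vnorm_matvec_le_frobenius[of m A n x] by linarith
qed

lemma sigma_max_nonneg: "0 \<le> sigma_max m n A"
proof -
  have "vnorm m (matvec A n (\<lambda>c. 0)) \<le> sigma_max m n A"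
    unfolding sigma_max_def
    by (rule cSUP_upper[OF _ bdd_above_sigma_max_set]) (simp add: vnorm_zero)
  then show ?thesis
    by (simp add: matvec_def vnorm_zero)
qed

lemma vnorm_matvec_le_sigma_max: "vnorm m (matvec A n x) \<le> sigma_max m n A * vnorm n x"
proof (cases "vnorm n x = 0")
  case True
  then show ?thesis
    using vnorm_matvec_le_frobenius[of m A n x] vnorm_nonneg[of m "matvec A n x"] by simp
next
  case False
  define s where "s = vnorm n x"
  have s: "0 < s"
    using False vnorm_nonneg[of n x] unfolding s_def by simp
  have unit: "vnorm n (\<lambda>c. x c / s) = 1"
    using vnorm_mult[of n "1 / s" x] s by (simp add: s_def)
  have "matvec A n (\<lambda>c. x c / s) = (\<lambda>r. matvec A n x r / s)"
    by (simp add: matvec_def fun_eq_iff sum_divide_distrib)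
  moreover have "vnorm m (matvec A n (\<lambda>c. x c / s)) \<le> sigma_max m n A"
    unfolding sigma_max_def by (rule cSUP_upper[OF _ bdd_above_sigma_max_set]) (simp add: unit)
  ultimately have "vnorm m (matvec A n x) / s \<le> sigma_max m n A"
    using vnorm_mult[of m "1 / s" "matvec A n x"] s by simp
  then show ?thesis
    using s by (simp add: s_def pos_divide_le_eq)
qed

lemma vnorm_matvec_matvec_diff_le:
  "vnorm l (\<lambda>r. matvec A m (matvec B n x) r - matvec A m (matvec B n y) r)
    \<le> sigma_max l m A * sigma_max m n B * vnorm n (\<lambda>c. x c - y c)"
proof -
  have "vnorm l (\<lambda>r. matvec A m (matvec B n x) r - matvec A m (matvec B n y) r)
      = vnorm l (matvec A m (matvec B n (\<lambda>c. x c - y c)))"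
    by (simp add: matvec_diff)
  also have "\<dots> \<le> sigma_max l m A * vnorm m (matvec B n (\<lambda>c. x c - y c))"
    by (rule vnorm_matvec_le_sigma_max)
  also have "\<dots> \<le> sigma_max l m A * (sigma_max m n B * vnorm n (\<lambda>c. x c - y c))"
    by (rule mult_left_mono[OF vnorm_matvec_le_sigma_max sigma_max_nonneg])
  finally show ?thesis
    by (simp add: mult.assoc)
qed

lemma contraction_tendsto_zero:
  fixes a b :: "nat \<Rightarrow> real"
  assumes nonneg: "\<And>t. 0 \<le> a t" and "0 \<le> \<rho>" "\<rho> < 1"
    and step: "\<And>t. a (Suc t) \<le> \<rho> * a t + b t" and "b \<longlonglongrightarrow> 0"
  shows "a \<longlonglongrightarrow> 0"
proof (rule LIMSEQ_I)
  fix \<epsilon> :: real assume "0 < \<epsilon>"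
  define c where "c = \<epsilon> / 2"
  have c: "0 < c" using \<open>0 < \<epsilon>\<close> by (simp add: c_def)
  obtain T where T: "\<And>t. t \<ge> T \<Longrightarrow> \<bar>b t\<bar> < (1 - \<rho>) * c"
    using \<open>b \<longlonglongrightarrow> 0\<close> c \<open>\<rho> < 1\<close> unfolding LIMSEQ_iff
    by (metis diff_gt_0_iff_gt diff_zero mult_pos_pos real_norm_def)
  have iterate: "a (T + k) \<le> \<rho> ^ k * a T + c" for k
  proof (induction k)
    case 0
    then show ?case using c by simp
  next
    case (Suc k)
    have "a (T + Suc k) \<le> \<rho> * (\<rho> ^ k * a T + c) + (1 - \<rho>) * c"
      using step[of "T + k"] mult_left_mono[OF Suc \<open>0 \<le> \<rho>\<close>] T[of "T + k"] by simp
    then show ?case by (simp add: algebra_simps)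
  qed
  have "(\<lambda>k. \<rho> ^ k * a T) \<longlonglongrightarrow> 0"
    using LIMSEQ_power_zero[of \<rho>] \<open>0 \<le> \<rho>\<close> \<open>\<rho> < 1\<close> by (auto intro: tendsto_mult_left_zero)
  then obtain K where K: "\<And>k. k \<ge> K \<Longrightarrow> \<bar>\<rho> ^ k * a T\<bar> < c"
    using c unfolding LIMSEQ_iff by (metis diff_zero real_norm_def)
  show "\<exists>t0. \<forall>t\<ge>t0. norm (a t - 0) < \<epsilon>"
  proof (intro exI allI impI)
    fix t assume "T + K \<le> t"
    then have "a t \<le> \<rho> ^ (t - T) * a T + c" "\<bar>\<rho> ^ (t - T) * a T\<bar> < c"
      using iterate[of "t - T"] K[of "t - T"] by simp_all
    then show "norm (a t - 0) < \<epsilon>"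
      using nonneg[of t] by (simp add: c_def)
  qed
qed

lemma leaky_tanh_update_dist:
  assumes "0 \<le> \<gamma>" "\<gamma> \<le> 1"
    and x': "\<forall>r<n. x' r = (1 - \<gamma>) * x r + \<gamma> * tanh (matvec W n x r + p r)"
    and y': "\<forall>r<n. y' r = (1 - \<gamma>) * y r + \<gamma> * tanh (matvec W n y r + q r)"
  shows "vnorm n (\<lambda>r. x' r - y' r)
    \<le> (1 - \<gamma> + \<gamma> * sigma_max n n W) * vnorm n (\<lambda>r. x r - y r) + \<gamma> * vnorm n (\<lambda>r. p r - q r)"
proof -
  define e where "e = (\<lambda>r. x r - y r)"
  have pointwise: "\<bar>x' r - y' r\<bar> \<le> (1 - \<gamma>) * \<bar>e r\<bar> + \<gamma> * \<bar>matvec W n e r\<bar> + \<gamma> * \<bar>p r - q r\<bar>"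
    if "r < n" for r
  proof -
    let ?a = "matvec W n x r + p r" and ?b = "matvec W n y r + q r"
    have "?a - ?b = matvec W n e r + (p r - q r)"
      using fun_cong[OF matvec_diff[of W n x y], of r] by (simp add: e_def)
    then have tanh_dist: "\<bar>tanh ?a - tanh ?b\<bar> \<le> \<bar>matvec W n e r\<bar> + \<bar>p r - q r\<bar>"
      using tanh_real_lipschitz[of ?a ?b] by linarith
    have "x' r - y' r = (1 - \<gamma>) * e r + \<gamma> * (tanh ?a - tanh ?b)"
      using x'[rule_format, OF \<open>r < n\<close>] y'[rule_format, OF \<open>r < n\<close>] by (simp add: e_def algebra_simps)
    then have "\<bar>x' r - y' r\<bar> \<le> (1 - \<gamma>) * \<bar>e r\<bar> + \<gamma> * \<bar>tanh ?a - tanh ?b\<bar>"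
      using assms(1,2) abs_triangle_ineq[of "(1 - \<gamma>) * e r" "\<gamma> * (tanh ?a - tanh ?b)"]
      by (simp add: abs_mult)
    also have "\<dots> \<le> (1 - \<gamma>) * \<bar>e r\<bar> + \<gamma> * (\<bar>matvec W n e r\<bar> + \<bar>p r - q r\<bar>)"
      using mult_left_mono[OF tanh_dist \<open>0 \<le> \<gamma>\<close>] by simp
    finally show ?thesis
      by (simp add: distrib_left add.assoc)
  qed
  have "vnorm n (\<lambda>r. x' r - y' r)
      \<le> vnorm n (\<lambda>r. (1 - \<gamma>) * \<bar>e r\<bar> + \<gamma> * \<bar>matvec W n e r\<bar> + \<gamma> * \<bar>p r - q r\<bar>)"
    using pointwise assms(1,2) by (intro vnorm_mono_abs) force
  also have "\<dots> \<le> (1 - \<gamma>) * vnorm n e + \<gamma> * vnorm n (matvec W n e) + \<gamma> * vnorm n (\<lambda>r. p r - q r)"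
    using vnorm_triangle[of n "\<lambda>r. (1 - \<gamma>) * \<bar>e r\<bar>" "\<lambda>r. \<gamma> * \<bar>matvec W n e r\<bar>"]
      vnorm_triangle[of n "\<lambda>r. (1 - \<gamma>) * \<bar>e r\<bar> + \<gamma> * \<bar>matvec W n e r\<bar>" "\<lambda>r. \<gamma> * \<bar>p r - q r\<bar>"]
      assms(1,2)
    by (simp add: vnorm_mult vnorm_abs)
  also have "\<dots> \<le> (1 - \<gamma>) * vnorm n e + \<gamma> * (sigma_max n n W * vnorm n e) + \<gamma> * vnorm n (\<lambda>r. p r - q r)"
    using mult_left_mono[OF vnorm_matvec_le_sigma_max \<open>0 \<le> \<gamma>\<close>] by simp
  finally show ?thesis
    by (simp add: e_def algebra_simps)
qed

lemma deep_esn_trajD: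
  assumes "deep_esn_traj K D N M \<gamma> Wres Win Wenc u x" "i \<in> {1..K}" "r < N i"
  shows "x (Suc t) i r = (1 - \<gamma>) * x t i r
    + \<gamma> * tanh (matvec (Wres i) (N i) (x t i) r
       + (if i = 1 then matvec (Win 1) D (u (Suc t)) r
          else matvec (Win i) (M (i - 1)) (matvec (Wenc (i - 1)) (N (i - 1)) (x (Suc t) (i - 1))) r))"
  using assms unfolding deep_esn_traj_def by blast

lemma deep_esn_layer_dist_step:
  assumes x: "deep_esn_traj K D N M \<gamma> Wres Win Wenc u x"
    and y: "deep_esn_traj K D N M \<gamma> Wres Win Wenc u y"
    and "0 \<le> \<gamma>" "\<gamma> \<le> 1" and "i \<in> {1..K}"
  shows "vnorm (N i) (\<lambda>r. x (Suc t) i r - y (Suc t) i r)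
    \<le> (1 - \<gamma> + \<gamma> * sigma_max (N i) (N i) (Wres i)) * vnorm (N i) (\<lambda>r. x t i r - y t i r)
      + \<gamma> * (if i = 1 then 0
             else sigma_max (N i) (M (i - 1)) (Win i) * sigma_max (M (i - 1)) (N (i - 1)) (Wenc (i - 1))
                  * vnorm (N (i - 1)) (\<lambda>r. x (Suc t) (i - 1) r - y (Suc t) (i - 1) r))"
proof -
  define input where "input z = (if i = 1 then matvec (Win 1) D (u (Suc t))
    else matvec (Win i) (M (i - 1)) (matvec (Wenc (i - 1)) (N (i - 1)) (z (Suc t) (i - 1))))"
    for z :: "nat \<Rightarrow> nat \<Rightarrow> nat \<Rightarrow> real"
  have step: "vnorm (N i) (\<lambda>r. x (Suc t) i r - y (Suc t) i r)
    \<le> (1 - \<gamma> + \<gamma> * sigma_max (N i) (N i) (Wres i)) * vnorm (N i) (\<lambda>r. x t i r - y t i r)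
      + \<gamma> * vnorm (N i) (\<lambda>r. input x r - input y r)"
  proof (rule leaky_tanh_update_dist[where p = "input x" and q = "input y"])
    show "\<forall>r<N i. x (Suc t) i r = (1 - \<gamma>) * x t i r + \<gamma> * tanh (matvec (Wres i) (N i) (x t i) r + input x r)"
      using deep_esn_trajD[OF x \<open>i \<in> {1..K}\<close>] by (simp add: input_def)
    show "\<forall>r<N i. y (Suc t) i r = (1 - \<gamma>) * y t i r + \<gamma> * tanh (matvec (Wres i) (N i) (y t i) r + input y r)"
      using deep_esn_trajD[OF y \<open>i \<in> {1..K}\<close>] by (simp add: input_def)
  qed (use assms(3,4) in simp_all)
  have coupling: "vnorm (N i) (\<lambda>r. input x r - input y r)
    \<le> (if i = 1 then 0
       else sigma_max (N i) (M (i - 1)) (Win i) * sigma_max (M (i - 1)) (N (i - 1)) (Wenc (i - 1))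
            * vnorm (N (i - 1)) (\<lambda>r. x (Suc t) (i - 1) r - y (Suc t) (i - 1) r))"
    by (simp add: input_def vnorm_zero vnorm_matvec_matvec_diff_le)
  show ?thesis
    using step mult_left_mono[OF coupling \<open>0 \<le> \<gamma>\<close>] by linarith
qed

theorem mainTheorem1:
  fixes K D :: nat and N M :: "nat \<Rightarrow> nat" and \<gamma> :: real
    and Wres Win Wenc :: "nat \<Rightarrow> nat \<Rightarrow> nat \<Rightarrow> real"
    and u :: "nat \<Rightarrow> nat \<Rightarrow> real"
    and x y :: "nat \<Rightarrow> nat \<Rightarrow> nat \<Rightarrow> real"
  assumes "K \<ge> 1" and "D \<ge> 1"
    and "\<forall>i\<in>{1..K}. N i \<ge> 1"
    and "\<forall>j\<in>{1..K-1}. M j \<ge> 1"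
    and "0 < \<gamma>" and "\<gamma> \<le> 1"
    and "\<forall>i\<in>{1..K}. sigma_max (N i) (N i) (Wres i) < 1"
    and "deep_esn_traj K D N M \<gamma> Wres Win Wenc u x"
    and "deep_esn_traj K D N M \<gamma> Wres Win Wenc u y"
  shows "\<forall>i\<in>{1..K}. (\<lambda>t. vnorm (N i) (\<lambda>r. x t i r - y t i r)) \<longlonglongrightarrow> 0"
proof
  fix i assume "i \<in> {1..K}"
  then show "(\<lambda>t. vnorm (N i) (\<lambda>r. x t i r - y t i r)) \<longlonglongrightarrow> 0"
  proof (induction i rule: less_induct)
    case (less i)
    let ?coupling = "\<lambda>t. \<gamma> * (if i = 1 then 0
      else sigma_max (N i) (M (i - 1)) (Win i) * sigma_max (M (i - 1)) (N (i - 1)) (Wenc (i - 1))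
           * vnorm (N (i - 1)) (\<lambda>r. x (Suc t) (i - 1) r - y (Suc t) (i - 1) r))"
    have "(\<lambda>t. vnorm (N (i - 1)) (\<lambda>r. x t (i - 1) r - y t (i - 1) r)) \<longlonglongrightarrow> 0" if "i \<noteq> 1"
      using less that by auto
    then have coupling: "?coupling \<longlonglongrightarrow> 0"
      by (cases "i = 1") (auto intro!: tendsto_mult_right_zero dest: LIMSEQ_Suc)
    let ?\<sigma> = "sigma_max (N i) (N i) (Wres i)"
    have \<sigma>: "0 \<le> \<gamma> * ?\<sigma>" "\<gamma> * ?\<sigma> < \<gamma>"
      using sigma_max_nonneg assms(5,7) less.prems by simp_all
    show ?case
    proof (rule contraction_tendsto_zero[where \<rho> = "1 - \<gamma> + \<gamma> * ?\<sigma>" and b = ?coupling,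
          OF vnorm_nonneg _ _ _ coupling])
      show "vnorm (N i) (\<lambda>r. x (Suc t) i r - y (Suc t) i r)
        \<le> (1 - \<gamma> + \<gamma> * ?\<sigma>) * vnorm (N i) (\<lambda>r. x t i r - y t i r) + ?coupling t" for t
        using deep_esn_layer_dist_step[OF assms(8,9)] assms(5,6) less.prems by simp
    qed (use \<sigma> assms(6) in linarith)+
  qed
qed

end
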